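(* Let $X \in \mathbb{R}^{d\times n}$, $V_0, V_T \in \mathbb{R}^{m\times k}$, $W_0, W_T \in \mathbb{R}^{k\times d}$, and suppose $Y = V_T W_T X$ and $V_0 W_0 X \neq Y$. Define $\mathbf{z}(\alpha) = (V_0 + \alpha D_1)(W_0 + \alpha D_2)X$ for $\alpha\in[0,1]$, where $D_1 = V_T - V_0$ and $D_2 = W_T - W_0$, and let $\mathcal{L}(\alpha) = \frac{1}{2n}\Vert \mathbf{z}(\alpha) - Y\Vert_F^2$. If $\langle \mathbf{z}'(0), \mathbf{z}'(1)\rangle_F > 0$, where $\mathbf{z}'(0) = (D_1 W_0 + V_0 D_2)X$ and $\mathbf{z}'(1) = (D_1 W_T + V_T D_2)X$, then $\mathbf{z}'(\alpha)\neq 0$ for all $\alpha\in[0,1]$, the Gauss length of $\mathbf{z}$ is less than $\pi/2$, and $\alpha\mapsto\mathcal{L}(\alpha)$ is monotonically decreasing (non-increasing) on $[0,1]$.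
   Context: $\langle A, B\rangle_F = \operatorname{tr}(A^\top B)$ is the Frobenius inner product, and matrices in $\mathbb{R}^{m\times n}$ are identified with vectors in $\mathbb{R}^{mn}$. For a smooth curve $\mathbf{z}$ with nonvanishing derivative, let $\hat{\mathbf{v}}(\alpha) = \partial_\alpha \mathbf{z}(\alpha)/\Vert \partial_\alpha \mathbf{z}(\alpha)\Vert$; the Gauss length of $\mathbf{z}$ is $\int_0^1 \Vert \partial_\alpha \hat{\mathbf{v}}(\alpha)\Vert\, d\alpha$. Note $\mathbf{z}'(\alpha) = (D_1W_0 + V_0D_2 + 2\alpha D_1D_2)X$ is affine in $\alpha$. *)

theory Defs
  imports "HOL-Analysis.Analysis"
begin

text \<open>Matrices in R^(m x n) are represented as real^'n^'m (rows indexed by 'm).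
  The inner product / norm on this type is the Frobenius inner product / norm
  (sum over all entries), i.e. matrices are identified with vectors in R^(mn).\<close>

definition zcurve ::
  "real^'k^'m \<Rightarrow> real^'k^'m \<Rightarrow> real^'d^'k \<Rightarrow> real^'d^'k \<Rightarrow> real^'n^'d
     \<Rightarrow> real \<Rightarrow> real^'n^'m" where
  "zcurve V0 VT W0 WT X \<alpha> =
     ((V0 + \<alpha> *\<^sub>R (VT - V0)) ** (W0 + \<alpha> *\<^sub>R (WT - W0))) ** X"

definition unit_tangent :: "(real \<Rightarrow> 'a::real_normed_vector) \<Rightarrow> real \<Rightarrow> 'a" where
  "unit_tangent z \<alpha> =
     vector_derivative z (at \<alpha> within {0..1}) /\<^sub>R norm (vector_derivative z (at \<alpha> within {0..1}))"

definition gauss_integrand :: "(real \<Rightarrow> 'a::real_normed_vector) \<Rightarrow> real \<Rightarrow> real" where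
  "gauss_integrand z \<alpha> = norm (vector_derivative (unit_tangent z) (at \<alpha> within {0..1}))"

definition gauss_length :: "(real \<Rightarrow> 'a::real_normed_vector) \<Rightarrow> real" where
  "gauss_length z = integral {0..1} (gauss_integrand z)"

end

theory Submission
  imports Defs
begin

text \<open>Expanding the product gives z(\<alpha>) = A + \<alpha> B + \<alpha>^2 C with B = z'(0) and B + 2 C = z'(1), so the
  velocity w(\<alpha>) = B + 2 \<alpha> C is affine. Then w(\<alpha>) \<bullet> B is affine in \<alpha> and positive at both ends,
  so w never vanishes. The unit tangent turns with speed 2 sqrt(|B|^2 |C|^2 - (B \<bullet> C)^2) / |w|^2,
  whose integral is a difference of arctangents, namely the angle between w(0) and w(1); it is
  acute because w(0) \<bullet> w(1) > 0. For the loss, z(\<alpha>) - z(1) = (\<alpha> - 1) (B + (1 + \<alpha>) C), and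
  (B + (1 + \<alpha>) C) \<bullet> w(\<alpha>) is a nonnegative combination of |B|^2, B \<bullet> (B + 2 C) and |B + 2 C|^2.\<close>

lemma has_vector_derivative_normalize:
  fixes f :: "real \<Rightarrow> 'a::real_inner"
  assumes f: "(f has_vector_derivative f') (at t)" and nz: "f t \<noteq> 0"
  shows "((\<lambda>s. f s /\<^sub>R norm (f s)) has_vector_derivative
           (f' - ((f t \<bullet> f') / (f t \<bullet> f t)) *\<^sub>R f t) /\<^sub>R norm (f t)) (at t)"
proof -
  have "((\<lambda>s. norm (f s)) has_derivative (\<lambda>h. sgn (f t) \<bullet> (h *\<^sub>R f'))) (at t)"
    using has_derivative_compose[OF f[unfolded has_vector_derivative_def] has_derivative_norm[OF nz]]
    by (simp add: o_def inner_commute)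
  then have norm_deriv: "((\<lambda>s. norm (f s)) has_real_derivative (f t \<bullet> f') / norm (f t)) (at t)"
    unfolding has_field_derivative_def
    by (rule has_derivative_eq_rhs) (simp add: fun_eq_iff sgn_div_norm inner_commute field_simps)
  have "((\<lambda>s. inverse (norm (f s)) *\<^sub>R f s) has_vector_derivative
      inverse (norm (f t)) *\<^sub>R f' + (- (inverse (norm (f t)) * ((f t \<bullet> f') / norm (f t)) * inverse (norm (f t)))) *\<^sub>R f t) (at t)"
    using nz by (intro has_vector_derivative_scaleR f DERIV_inverse' norm_deriv) simp
  then show ?thesis
    using nz by (simp add: divide_inverse power2_eq_square algebra_simps flip: power2_norm_eq_inner)
qed

lemma norm_reject:
  fixes u v :: "'a::real_inner"
  assumes "u \<noteq> 0"
  shows "norm (v - ((u \<bullet> v) / (u \<bullet> u)) *\<^sub>R u) = sqrt ((u \<bullet> u) * (v \<bullet> v) - (u \<bullet> v)\<^sup>2) / norm u"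
proof -
  have "(norm (v - ((u \<bullet> v) / (u \<bullet> u)) *\<^sub>R u))\<^sup>2 = ((u \<bullet> u) * (v \<bullet> v) - (u \<bullet> v)\<^sup>2) / (u \<bullet> u)"
    using assms unfolding power2_norm_eq_inner
    by (simp add: inner_simps inner_commute field_simps power2_eq_square)
  then show ?thesis
    by (simp add: norm_eq_sqrt_inner real_sqrt_divide)
qed

lemma gram_shear:
  fixes u v :: "'a::real_inner"
  shows "((u + s *\<^sub>R v) \<bullet> (u + s *\<^sub>R v)) * (v \<bullet> v) - ((u + s *\<^sub>R v) \<bullet> v)\<^sup>2
       = (u \<bullet> u) * (v \<bullet> v) - (u \<bullet> v)\<^sup>2"
  by (simp add: inner_simps inner_commute algebra_simps power2_eq_square)

lemma arctan_diff_less_pi_half: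
  fixes x y :: real
  assumes "1 + x * y > 0"
  shows "arctan x - arctan y < pi / 2"
proof (cases "y \<ge> 0 \<or> x \<le> 0")
  case True
  then show ?thesis
    using arctan_ubound[of x] arctan_lbound[of y] arctan_less_zero_iff[of y] arctan_le_zero_iff[of x]
    by linarith
next
  case False
  then have "x < 1 / (- y)"
    using assms by (simp add: field_simps)
  then have "arctan x < arctan (1 / (- y))"
    by (simp add: arctan_less_iff)
  also have "arctan (1 / (- y)) = pi / 2 + arctan y"
    using False arctan_inverse[of "- y"] by (simp add: arctan_minus inverse_eq_divide)
  finally show ?thesis by simp
qed

lemma has_real_derivative_arctan_quadratic:
  fixes b c e :: real
  assumes "e > 0" "b * e - c\<^sup>2 > 0"
  shows "((\<lambda>t. arctan ((2 * e * t + c) / sqrt (b * e - c\<^sup>2))) has_real_derivative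
           2 * sqrt (b * e - c\<^sup>2) / (b + 4 * c * t + 4 * e * t\<^sup>2)) (at t)"
proof -
  define s where "s = sqrt (b * e - c\<^sup>2)"
  have s: "s > 0" "s\<^sup>2 = b * e - c\<^sup>2"
    using assms by (auto simp: s_def)
  define q where "q = b + 4 * c * t + 4 * e * t\<^sup>2"
  have eq: "e * q = (2 * e * t + c)\<^sup>2 + s\<^sup>2"
    using s by (simp add: q_def algebra_simps power2_eq_square)
  then have "q > 0"
    using s assms(1) by (metis add_nonneg_pos zero_less_mult_pos zero_less_power zero_le_power2)
  have "1 + ((2 * e * t + c) / s)\<^sup>2 = e * q / s\<^sup>2"
    using s(1) by (simp add: eq field_simps)
  then have "2 * e / s * inverse (1 + ((2 * e * t + c) / s)\<^sup>2) = 2 * s / q"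
    using s(1) assms(1) \<open>q > 0\<close> by (simp add: field_simps power2_eq_square)
  moreover have "((\<lambda>t. arctan ((2 * e * t + c) / s)) has_real_derivative
      2 * e / s * inverse (1 + ((2 * e * t + c) / s)\<^sup>2)) (at t)"
    using s by (auto intro!: derivative_eq_intros simp: field_simps)
  ultimately show ?thesis
    by (simp add: s_def q_def)
qed

lemma arctan_quadratic_diff_less_pi_half:
  fixes b c e :: real
  assumes "e > 0" "b * e - c\<^sup>2 > 0" "b + 2 * c > 0"
  shows "arctan ((2 * e * 1 + c) / sqrt (b * e - c\<^sup>2)) - arctan ((2 * e * 0 + c) / sqrt (b * e - c\<^sup>2)) < pi / 2"
proof (rule arctan_diff_less_pi_half)
  have "1 + (2 * e * 1 + c) / sqrt (b * e - c\<^sup>2) * ((2 * e * 0 + c) / sqrt (b * e - c\<^sup>2))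
      = e * (b + 2 * c) / (b * e - c\<^sup>2)"
    using assms(2) by (simp add: field_simps power2_eq_square)
  then show "1 + (2 * e * 1 + c) / sqrt (b * e - c\<^sup>2) * ((2 * e * 0 + c) / sqrt (b * e - c\<^sup>2)) > 0"
    using assms by simp
qed

definition quad_curve :: "'a::real_vector \<Rightarrow> 'a \<Rightarrow> 'a \<Rightarrow> real \<Rightarrow> 'a" where
  "quad_curve A B C t = A + t *\<^sub>R B + t\<^sup>2 *\<^sub>R C"

lemma quad_curve_has_vector_derivative:
  "(quad_curve A B C has_vector_derivative B + (2 * t) *\<^sub>R C) (at t)"
  unfolding quad_curve_def by (auto intro!: derivative_eq_intros simp: algebra_simps)

lemma vector_derivative_quad_curve:
  assumes "t \<in> {0..1}"
  shows "vector_derivative (quad_curve A B C) (at t within {0..1}) = B + (2 * t) *\<^sub>R C"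
proof -
  have "(quad_curve A B C has_vector_derivative B + (2 * t) *\<^sub>R C) (at t within cbox 0 1)"
    by (rule has_vector_derivative_at_within[OF quad_curve_has_vector_derivative])
  then show ?thesis
    using assms vector_derivative_within_cbox[of 0 1 t] by auto
qed

lemma quad_velocity_inner_pos:
  fixes B C :: "'a::real_inner"
  assumes "B \<bullet> (B + 2 *\<^sub>R C) > 0" "0 \<le> t" "t \<le> 1"
  shows "(B + (2 * t) *\<^sub>R C) \<bullet> B > 0"
proof -
  have "B \<bullet> B > 0"
    using assms(1) by auto
  moreover have "(B + (2 * t) *\<^sub>R C) \<bullet> B = (1 - t) * (B \<bullet> B) + t * (B \<bullet> (B + 2 *\<^sub>R C))"
    by (simp add: inner_simps inner_commute algebra_simps)
  ultimately show ?thesis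
    using assms by (cases "t = 1") (auto intro: add_pos_nonneg)
qed

lemma gauss_integrand_quad_curve:
  fixes A B C :: "'a::real_inner"
  assumes pos: "B \<bullet> (B + 2 *\<^sub>R C) > 0" and t: "t \<in> {0..1}"
  shows "gauss_integrand (quad_curve A B C) t
       = 2 * sqrt ((B \<bullet> B) * (C \<bullet> C) - (B \<bullet> C)\<^sup>2) / (B \<bullet> B + 4 * (B \<bullet> C) * t + 4 * (C \<bullet> C) * t\<^sup>2)"
proof -
  define w where "w s = B + (2 * s) *\<^sub>R C" for s
  define D where "D = (2 *\<^sub>R C - ((w t \<bullet> 2 *\<^sub>R C) / (w t \<bullet> w t)) *\<^sub>R w t) /\<^sub>R norm (w t)"
  have w_nz: "w s \<noteq> 0" if "s \<in> {0..1}" for s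
    using quad_velocity_inner_pos[OF pos, of s] that unfolding w_def by auto
  have "(w has_vector_derivative 2 *\<^sub>R C) (at t)"
    unfolding w_def by (auto intro!: derivative_eq_intros)
  from has_vector_derivative_normalize[OF this w_nz[OF t]]
  have "((\<lambda>s. w s /\<^sub>R norm (w s)) has_vector_derivative D) (at t within {0..1})"
    unfolding D_def by (rule has_vector_derivative_at_within)
  then have "(unit_tangent (quad_curve A B C) has_vector_derivative D) (at t within {0..1})"
    by (rule has_vector_derivative_transform[OF t, rotated])
       (simp add: unit_tangent_def vector_derivative_quad_curve w_def)
  then have "gauss_integrand (quad_curve A B C) t = norm D"
    using t vector_derivative_within_cbox[of 0 1 t, unfolded box_real] by (auto simp: gauss_integrand_def)
  also have "norm D = sqrt ((w t \<bullet> w t) * (2 *\<^sub>R C \<bullet> 2 *\<^sub>R C) - (w t \<bullet> 2 *\<^sub>R C)\<^sup>2) / (norm (w t))\<^sup>2"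
    unfolding D_def norm_scaleR norm_reject[OF w_nz[OF t]] by (simp add: power2_eq_square divide_inverse)
  also have "(w t \<bullet> w t) * (2 *\<^sub>R C \<bullet> 2 *\<^sub>R C) - (w t \<bullet> 2 *\<^sub>R C)\<^sup>2 = 4 * ((B \<bullet> B) * (C \<bullet> C) - (B \<bullet> C)\<^sup>2)"
    using gram_shear[of B "2 * t" C] by (simp add: w_def power2_eq_square algebra_simps)
  also have "(norm (w t))\<^sup>2 = B \<bullet> B + 4 * (B \<bullet> C) * t + 4 * (C \<bullet> C) * t\<^sup>2"
    unfolding w_def power2_norm_eq_inner by (simp add: inner_simps inner_commute algebra_simps power2_eq_square)
  finally show ?thesis
    by (simp only: real_sqrt_mult real_sqrt_four)
qed

lemma gauss_length_quad_curve_less_pi_half: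
  fixes A B C :: "'a::real_inner"
  assumes pos: "B \<bullet> (B + 2 *\<^sub>R C) > 0"
  shows "gauss_integrand (quad_curve A B C) integrable_on {0..1}
       \<and> gauss_length (quad_curve A B C) < pi / 2"
proof -
  define b c e where "b = B \<bullet> B" and "c = B \<bullet> C" and "e = C \<bullet> C"
  have integrand: "gauss_integrand (quad_curve A B C) t
      = 2 * sqrt (b * e - c\<^sup>2) / (b + 4 * c * t + 4 * e * t\<^sup>2)" if "t \<in> {0..1}" for t
    using gauss_integrand_quad_curve[OF pos that] by (simp add: b_def c_def e_def)
  have "c\<^sup>2 \<le> b * e"
    unfolding b_def c_def e_def by (rule Cauchy_Schwarz_ineq)
  then consider "b * e - c\<^sup>2 = 0" | "b * e - c\<^sup>2 > 0"
    by linarith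
  then obtain L where "(gauss_integrand (quad_curve A B C) has_integral L) {0..1}" "L < pi / 2"
  proof cases
    case 1
    then have "(gauss_integrand (quad_curve A B C) has_integral 0) {0..1}"
      by (subst has_integral_cong[where g = "\<lambda>_. 0"]) (auto simp: integrand)
    then show ?thesis
      using that by simp
  next
    case 2
    define F where "F t = arctan ((2 * e * t + c) / sqrt (b * e - c\<^sup>2))" for t
    have "C \<noteq> 0"
    proof
      assume "C = 0"
      with 2 show False
        by (simp add: c_def e_def)
    qed
    then have "e > 0"
      by (simp add: e_def)
    have "((\<lambda>t. 2 * sqrt (b * e - c\<^sup>2) / (b + 4 * c * t + 4 * e * t\<^sup>2)) has_integral F 1 - F 0) {0..1}"
      unfolding F_def using has_real_derivative_arctan_quadratic[OF \<open>e > 0\<close> 2]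
      by (intro fundamental_theorem_of_calculus)
         (auto simp: has_real_derivative_iff_has_vector_derivative intro: has_vector_derivative_at_within)
    then have "(gauss_integrand (quad_curve A B C) has_integral F 1 - F 0) {0..1}"
      by (rule has_integral_cong[THEN iffD2, rotated]) (simp add: integrand)
    moreover have "F 1 - F 0 < pi / 2"
      using \<open>e > 0\<close> 2 pos unfolding F_def
      by (intro arctan_quadratic_diff_less_pi_half) (simp_all add: b_def c_def inner_simps)
    ultimately show ?thesis
      using that by blast
  qed
  then show ?thesis
    unfolding gauss_length_def by (auto simp: integral_unique has_integral_integrable)
qed

lemma inner_chord_velocity_nonneg:
  fixes B C :: "'a::real_inner"
  assumes "B \<bullet> (B + 2 *\<^sub>R C) > 0" "0 \<le> x" "x \<le> 1"
  shows "(B + (1 + x) *\<^sub>R C) \<bullet> (B + (2 * x) *\<^sub>R C) \<ge> 0"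
proof -
  have "(B + (1 + x) *\<^sub>R C) \<bullet> (B + (2 * x) *\<^sub>R C)
      = (1 - x)\<^sup>2 / 2 * (B \<bullet> B) + (1 - x) * (1 + 2 * x) / 2 * (B \<bullet> (B + 2 *\<^sub>R C))
        + x * (1 + x) / 2 * ((B + 2 *\<^sub>R C) \<bullet> (B + 2 *\<^sub>R C))"
    by (simp add: inner_simps inner_commute field_simps power2_eq_square)
  also have "\<dots> \<ge> 0"
    using assms by (intro add_nonneg_nonneg mult_nonneg_nonneg) auto
  finally show ?thesis .
qed

lemma norm_quad_curve_diff_end_antimono:
  fixes A B C :: "'a::real_inner"
  assumes "B \<bullet> (B + 2 *\<^sub>R C) > 0" "0 \<le> a" "a \<le> b" "b \<le> 1"
  shows "norm (quad_curve A B C b - quad_curve A B C 1) \<le> norm (quad_curve A B C a - quad_curve A B C 1)"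
proof -
  define g where "g x = (norm ((x - 1) *\<^sub>R B + (x\<^sup>2 - 1) *\<^sub>R C))\<^sup>2" for x
  have g_eq: "(norm (quad_curve A B C x - quad_curve A B C 1))\<^sup>2 = g x" for x
    unfolding g_def quad_curve_def by (simp add: algebra_simps)
  have "g b \<le> g a"
  proof (rule DERIV_nonpos_imp_nonincreasing[OF \<open>a \<le> b\<close>])
    fix x assume x: "a \<le> x" "x \<le> b"
    have "(g has_real_derivative 2 * (x - 1) * ((B + (1 + x) *\<^sub>R C) \<bullet> (B + (2 * x) *\<^sub>R C))) (at x)"
      unfolding g_def power2_norm_eq_inner
      by (auto intro!: derivative_eq_intros simp: inner_simps inner_commute algebra_simps power2_eq_square)
    moreover have "2 * (x - 1) * ((B + (1 + x) *\<^sub>R C) \<bullet> (B + (2 * x) *\<^sub>R C)) \<le> 0"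
      using inner_chord_velocity_nonneg[of B C x] assms x
      by (simp add: mult_nonpos_nonneg)
    ultimately show "\<exists>y. (g has_real_derivative y) (at x) \<and> y \<le> 0" by blast
  qed
  then show ?thesis
    by (simp flip: g_eq)
qed

lemma matrix_add_rdistrib: "(A + B) ** X = A ** X + B ** X"
  by (simp add: matrix_matrix_mult_def vec_eq_iff sum.distrib algebra_simps)

lemma matrix_diff_rdistrib: "(A - B) ** (X :: 'a::ring_1^'n^'k) = A ** X - B ** X"
  by (simp add: matrix_matrix_mult_def vec_eq_iff left_diff_distrib sum_subtractf)

lemma matrix_diff_ldistrib: "(X :: 'a::ring_1^'n^'k) ** (A - B) = X ** A - X ** B"
  by (simp add: matrix_matrix_mult_def vec_eq_iff right_diff_distrib sum_subtractf)

lemma zcurve_eq_quad_curve: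
  "zcurve V0 VT W0 WT X = quad_curve ((V0 ** W0) ** X) (((VT - V0) ** W0 + V0 ** (WT - W0)) ** X)
     (((VT - V0) ** (WT - W0)) ** X)"
  by (simp add: fun_eq_iff zcurve_def quad_curve_def matrix_add_ldistrib matrix_add_rdistrib
      matrix_diff_rdistrib matrix_diff_ldistrib matrix_mul_assoc matrix_scalar_ac
      scalar_matrix_assoc[symmetric] power2_eq_square algebra_simps)

lemma zcurve_velocity_at_one:
  fixes V0 VT :: "real^'k^'m" and W0 WT :: "real^'d^'k" and X :: "real^'n^'d"
  shows "((VT - V0) ** W0 + V0 ** (WT - W0)) ** X + 2 *\<^sub>R (((VT - V0) ** (WT - W0)) ** X)
     = ((VT - V0) ** WT + VT ** (WT - W0)) ** X"
proof -
  have "((VT - V0) ** WT + VT ** (WT - W0)) ** X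
      = ((VT - V0) ** (W0 + (WT - W0)) + (V0 + (VT - V0)) ** (WT - W0)) ** X"
    by simp
  also have "\<dots> = ((VT - V0) ** W0 + V0 ** (WT - W0)) ** X + 2 *\<^sub>R (((VT - V0) ** (WT - W0)) ** X)"
    unfolding matrix_add_ldistrib matrix_add_rdistrib scaleR_2 by (simp only: add_ac)
  finally show ?thesis ..
qed

theorem mainTheorem4:
  fixes X :: "real^'n^'d"
    and V0 VT :: "real^'k^'m"
    and W0 WT :: "real^'d^'k"
    and Y :: "real^'n^'m"
  assumes hY: "Y = (VT ** WT) ** X"
    and hne: "(V0 ** W0) ** X \<noteq> Y"
    and hpos: "(((VT - V0) ** W0 + V0 ** (WT - W0)) ** X) \<bullet> (((VT - V0) ** WT + VT ** (WT - W0)) ** X) > 0"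
  shows "(\<forall>\<alpha>\<in>{0..1}. vector_derivative (zcurve V0 VT W0 WT X) (at \<alpha> within {0..1}) \<noteq> 0)
    \<and> gauss_integrand (zcurve V0 VT W0 WT X) integrable_on {0..1}
    \<and> gauss_length (zcurve V0 VT W0 WT X) < pi / 2
    \<and> (\<forall>a b. 0 \<le> a \<longrightarrow> a \<le> b \<longrightarrow> b \<le> 1 \<longrightarrow>
          1 / (2 * real CARD('n)) * (norm (zcurve V0 VT W0 WT X b - Y))\<^sup>2
        \<le> 1 / (2 * real CARD('n)) * (norm (zcurve V0 VT W0 WT X a - Y))\<^sup>2)"
proof -
  define A B C where "A = (V0 ** W0) ** X" and "B = ((VT - V0) ** W0 + V0 ** (WT - W0)) ** X"
    and "C = ((VT - V0) ** (WT - W0)) ** X"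
  have z: "zcurve V0 VT W0 WT X = quad_curve A B C"
    unfolding A_def B_def C_def by (rule zcurve_eq_quad_curve)
  have pos: "B \<bullet> (B + 2 *\<^sub>R C) > 0"
    using hpos by (simp add: B_def C_def zcurve_velocity_at_one)
  have Y: "Y = quad_curve A B C 1"
    using hY by (simp add: z[symmetric] zcurve_def)
  have "vector_derivative (quad_curve A B C) (at t within {0..1}) \<noteq> 0" if "t \<in> {0..1}" for t
    using quad_velocity_inner_pos[OF pos, of t] that by (auto simp: vector_derivative_quad_curve)
  moreover have "(norm (quad_curve A B C b - Y))\<^sup>2 \<le> (norm (quad_curve A B C a - Y))\<^sup>2"
    if "0 \<le> a" "a \<le> b" "b \<le> 1" for a b
    unfolding Y using norm_quad_curve_diff_end_antimono[OF pos that] by (simp add: power_mono)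
  ultimately show ?thesis
    using gauss_length_quad_curve_less_pi_half[OF pos] unfolding z
    by (simp add: divide_right_mono)
qed

end
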